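(* For every $r\ge1$ and every $z\in\mathbb{C}$ with $z\ne0$, there is an algebra isomorphism $\mathcal{P}'_r(z)\cong\mathcal{P}'_r(1)$, and $\mathcal{P}'_r(1)$ is the semigroup algebra $\mathbb{C}\mathcal{P}'_r$ of the rook monoid $\mathcal{P}'_r$.
   Context: A partial permutation of $\{1,\dots,r\}$ is a bijection $d:X\to Y$ between subsets $X=\mathrm{dom}(d)$, $Y=\mathrm{im}(d)$ of $\{1,\dots,r\}$; maps are written on the right and composed by $x(d_1\circ d_2)=(xd_1)d_2$. The rook monoid $\mathcal{P}'_r$ is the monoid of all partial permutations of $\{1,\dots,r\}$ under this composition. For $z\in\mathbb{C}$, $\mathcal{P}'_r(z)$ is the algebra with basis $\mathcal{P}'_r$ and product $d_1d_2=z^{N}(d_1\circ d_2)$ with $N=r-|\mathrm{im}(d_1)\cup\mathrm{dom}(d_2)|$ (the subalgebra of the partition algebra $\mathcal{P}_r(z)$ spanned by partial permutation diagrams). *)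

theory Defs
  imports Main Complex_Main
begin

definition rook :: "nat \<Rightarrow> (nat \<rightharpoonup> nat) set" where
  "rook r = {d. dom d \<subseteq> {1..r} \<and> ran d \<subseteq> {1..r} \<and> inj_on d (dom d)}"

text \<open>Composition with maps on the right: x (d1 o d2) = (x d1) d2.\<close>
definition rcomp :: "(nat \<rightharpoonup> nat) \<Rightarrow> (nat \<rightharpoonup> nat) \<Rightarrow> (nat \<rightharpoonup> nat)" where
  "rcomp d1 d2 = d2 \<circ>\<^sub>m d1"

definition rook_N :: "nat \<Rightarrow> (nat \<rightharpoonup> nat) \<Rightarrow> (nat \<rightharpoonup> nat) \<Rightarrow> nat" where
  "rook_N r d1 d2 = r - card (ran d1 \<union> dom d2)"

text \<open>Underlying vector space of the algebras with basis rook r: complex functions on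
  the basis (vanishing off the basis).\<close>
definition rook_space :: "nat \<Rightarrow> ((nat \<rightharpoonup> nat) \<Rightarrow> complex) set" where
  "rook_space r = {a. \<forall>d. d \<notin> rook r \<longrightarrow> a d = 0}"

text \<open>Product in P'_r(z): bilinear extension of d1 d2 = z^N (d1 o d2).\<close>
definition twisted_mult :: "nat \<Rightarrow> complex \<Rightarrow> ((nat \<rightharpoonup> nat) \<Rightarrow> complex)
    \<Rightarrow> ((nat \<rightharpoonup> nat) \<Rightarrow> complex) \<Rightarrow> ((nat \<rightharpoonup> nat) \<Rightarrow> complex)" where
  "twisted_mult r z a b = (\<lambda>d. \<Sum>d1\<in>rook r. \<Sum>d2\<in>rook r.
      (if rcomp d1 d2 = d then z ^ rook_N r d1 d2 * a d1 * b d2 else 0))"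

definition rook_alg_mult :: "nat \<Rightarrow> ((nat \<rightharpoonup> nat) \<Rightarrow> complex)
    \<Rightarrow> ((nat \<rightharpoonup> nat) \<Rightarrow> complex) \<Rightarrow> ((nat \<rightharpoonup> nat) \<Rightarrow> complex)" where
  "rook_alg_mult r a b = (\<lambda>d. \<Sum>d1\<in>rook r. \<Sum>d2\<in>rook r.
      (if rcomp d1 d2 = d then a d1 * b d2 else 0))"

definition basis_elt :: "(nat \<rightharpoonup> nat) \<Rightarrow> ((nat \<rightharpoonup> nat) \<Rightarrow> complex)" where
  "basis_elt d = (\<lambda>e. if e = d then 1 else 0)"

definition rook_id :: "nat \<Rightarrow> (nat \<rightharpoonup> nat)" where
  "rook_id r = (\<lambda>x. if x \<in> {1..r} then Some x else None)"

definition twisted_alg_iso :: "nat \<Rightarrow> complex \<Rightarrow> complex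
    \<Rightarrow> (((nat \<rightharpoonup> nat) \<Rightarrow> complex) \<Rightarrow> ((nat \<rightharpoonup> nat) \<Rightarrow> complex)) \<Rightarrow> bool" where
  "twisted_alg_iso r z w \<phi> \<longleftrightarrow>
     bij_betw \<phi> (rook_space r) (rook_space r) \<and>
     (\<forall>a\<in>rook_space r. \<forall>b\<in>rook_space r. \<phi> (\<lambda>d. a d + b d) = (\<lambda>d. \<phi> a d + \<phi> b d)) \<and>
     (\<forall>c. \<forall>a\<in>rook_space r. \<phi> (\<lambda>d. c * a d) = (\<lambda>d. c * \<phi> a d)) \<and>
     (\<forall>a\<in>rook_space r. \<forall>b\<in>rook_space r.
        \<phi> (twisted_mult r z a b) = twisted_mult r w (\<phi> a) (\<phi> b)) \<and>
     \<phi> (basis_elt (rook_id r)) = basis_elt (rook_id r)"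

end

theory Submission
  imports Defs
begin

text \<open>Rescaling each basis vector d by z to the power r - rank d turns the product of
  P'_r(z) into that of P'_r(1). Indeed the rank of d1 d2 is the size of
  im d1 \<inter> dom d2, so inclusion-exclusion gives
  (r - rank (d1 d2)) + N = (r - rank d1) + (r - rank d2), and the rescaling is invertible
  because z \<noteq> 0.\<close>

definition corank :: "nat \<Rightarrow> (nat \<rightharpoonup> nat) \<Rightarrow> nat" where
  "corank r d = r - card (dom d)"

lemma card_ran_eq_card_dom:
  assumes "inj_on m (dom m)"
  shows "card (ran m) = card (dom m)"
proof -
  have "inj_on (the \<circ> m) (dom m)"
    using assms unfolding inj_on_def by (metis comp_apply domD option.sel)
  moreover have "(the \<circ> m) ` dom m = ran m"
    unfolding ran_def dom_def by force
  ultimately show ?thesis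
    using card_image by metis
qed

lemma card_dom_rcomp:
  assumes "inj_on d1 (dom d1)"
  shows "card (dom (rcomp d1 d2)) = card (ran d1 \<inter> dom d2)"
proof -
  have dom_eq: "dom (rcomp d1 d2) = {x \<in> dom d1. the (d1 x) \<in> dom d2}"
    unfolding rcomp_def dom_def map_comp_def by (auto split: option.splits)
  have "inj_on (the \<circ> d1) {x \<in> dom d1. the (d1 x) \<in> dom d2}"
    using assms unfolding inj_on_def by (metis (mono_tags) comp_apply domD mem_Collect_eq option.sel)
  moreover have "(the \<circ> d1) ` {x \<in> dom d1. the (d1 x) \<in> dom d2} = ran d1 \<inter> dom d2"
    unfolding ran_def dom_def by force
  ultimately show ?thesis
    unfolding dom_eq using card_image by metis
qed

lemma corank_rcomp_add_rook_N:
  assumes d1: "d1 \<in> rook r" and d2: "d2 \<in> rook r"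
  shows "corank r (rcomp d1 d2) + rook_N r d1 d2 = corank r d1 + corank r d2"
proof -
  have sub: "dom d1 \<subseteq> {1..r}" "ran d1 \<subseteq> {1..r}" "dom d2 \<subseteq> {1..r}"
    and inj: "inj_on d1 (dom d1)"
    using d1 d2 by (auto simp: rook_def)
  have fin: "finite (ran d1)" "finite (dom d2)"
    using sub finite_subset by blast+
  have "card (ran d1) = card (dom d1)"
    by (rule card_ran_eq_card_dom[OF inj])
  moreover have "card (dom d1) \<le> r" "card (dom d2) \<le> r" "card (ran d1 \<union> dom d2) \<le> r"
    using sub by (auto intro!: card_mono[of "{1..r}", simplified])
  moreover have "card (ran d1 \<union> dom d2) + card (ran d1 \<inter> dom d2) = card (ran d1) + card (dom d2)"
    using card_Un_Int[OF fin] by simp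
  moreover have "card (ran d1 \<inter> dom d2) \<le> card (dom d2)"
    using fin(2) by (simp add: card_mono)
  ultimately show ?thesis
    unfolding corank_def rook_N_def card_dom_rcomp[OF inj] by linarith
qed

lemma corank_rook_id: "corank r (rook_id r) = 0"
proof -
  have "dom (rook_id r) = {1..r}"
    unfolding rook_id_def dom_def by auto
  then show ?thesis
    unfolding corank_def by simp
qed

lemma twisted_alg_iso_rescale:
  fixes f :: "(nat \<rightharpoonup> nat) \<Rightarrow> complex"
  assumes nonzero: "\<And>d. f d \<noteq> 0"
    and structure_constants: "\<And>d1 d2. d1 \<in> rook r \<Longrightarrow> d2 \<in> rook r \<Longrightarrow>
          f (rcomp d1 d2) * z ^ rook_N r d1 d2 = w ^ rook_N r d1 d2 * f d1 * f d2"
    and unit: "f (rook_id r) = 1"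
  shows "twisted_alg_iso r z w (\<lambda>a d. f d * a d)"
proof -
  let ?\<phi> = "\<lambda>a d. f d * a d"
  have bij: "bij_betw ?\<phi> (rook_space r) (rook_space r)"
    by (rule bij_betw_byWitness[where f' = "\<lambda>a d. a d / f d"])
       (auto simp: rook_space_def nonzero)
  have mult: "?\<phi> (twisted_mult r z a b) = twisted_mult r w (?\<phi> a) (?\<phi> b)" for a b
  proof
    fix d
    have "?\<phi> (twisted_mult r z a b) d = (\<Sum>d1\<in>rook r. \<Sum>d2\<in>rook r.
        if rcomp d1 d2 = d then f (rcomp d1 d2) * z ^ rook_N r d1 d2 * a d1 * b d2 else 0)"
      unfolding twisted_mult_def
      by (simp add: sum_distrib_left mult.assoc if_distrib cong: if_cong)
    also have "\<dots> = twisted_mult r w (?\<phi> a) (?\<phi> b) d"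
      unfolding twisted_mult_def
    proof (intro sum.cong refl)
      fix d1 d2 assume "d1 \<in> rook r" "d2 \<in> rook r"
      then show "(if rcomp d1 d2 = d then f (rcomp d1 d2) * z ^ rook_N r d1 d2 * a d1 * b d2 else 0)
          = (if rcomp d1 d2 = d then w ^ rook_N r d1 d2 * (f d1 * a d1) * (f d2 * b d2) else 0)"
        by (subst structure_constants) (simp_all add: mult_ac)
    qed
    finally show "?\<phi> (twisted_mult r z a b) d = twisted_mult r w (?\<phi> a) (?\<phi> b) d" .
  qed
  have "?\<phi> (basis_elt (rook_id r)) = basis_elt (rook_id r)"
    unfolding basis_elt_def using unit by auto
  with bij mult show ?thesis
    unfolding twisted_alg_iso_def by (simp add: algebra_simps)
qed

lemma twisted_mult_one: "twisted_mult r 1 a b = rook_alg_mult r a b"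
  unfolding twisted_mult_def rook_alg_mult_def by (simp cong: if_cong)

theorem corollary8p7:
  fixes r :: nat and z :: complex
  assumes "r \<ge> 1" and "z \<noteq> 0"
  shows "(\<exists>\<phi>. twisted_alg_iso r z 1 \<phi>) \<and>
         (\<forall>a\<in>rook_space r. \<forall>b\<in>rook_space r. twisted_mult r 1 a b = rook_alg_mult r a b)"
proof
  have "twisted_alg_iso r z 1 (\<lambda>a d. z ^ corank r d * a d)"
  proof (rule twisted_alg_iso_rescale)
    fix d1 d2 assume "d1 \<in> rook r" "d2 \<in> rook r"
    then show "z ^ corank r (rcomp d1 d2) * z ^ rook_N r d1 d2
        = 1 ^ rook_N r d1 d2 * z ^ corank r d1 * z ^ corank r d2"
      by (metis corank_rcomp_add_rook_N power_add power_one mult_1)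
  qed (simp_all add: \<open>z \<noteq> 0\<close> corank_rook_id)
  then show "\<exists>\<phi>. twisted_alg_iso r z 1 \<phi>" by blast
next
  show "\<forall>a\<in>rook_space r. \<forall>b\<in>rook_space r. twisted_mult r 1 a b = rook_alg_mult r a b"
    by (simp add: twisted_mult_one)
qed

end
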